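(* Let $\vec e$ be a finite set of input-output examples and let $\mathcal{P}_i\subseteq\mathcal{U}$ be a set of predicates. Let $\Pi_i$ be a program returned by the ranking step in iteration $i$ of the synthesis loop, so $\Pi_i\in\mathcal{L}(\mathcal{A}_{\mathcal{P}_i})$, and suppose $\Pi_i$ does not satisfy some example $e=(e_{in},e_{out})\in\vec e$. Let $\mathcal{I}$ be a proof of incorrectness of $\Pi_i$ with respect to $e$, and let $\mathcal{P}_{i+1}=\mathcal{P}_i\cup\{\text{predicates occurring in } \mathcal{I}\}$. Then $\Pi_i\notin\mathcal{L}(\mathcal{A}_{\mathcal{P}_{i+1}})$ and $\mathcal{L}(\mathcal{A}_{\mathcal{P}_{i+1}})\subsetneq\mathcal{L}(\mathcal{A}_{\mathcal{P}_i})$.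
   Context: A DSL is given by a context-free grammar $G$ with start symbol $s_0$. Each production has the form $s\to t$ with $t$ a terminal, which is either the program input variable $x$ or a constant, or $s\to f(s_1,\dots,s_n)$ with $f$ a function symbol. Programs are finite ASTs derived from $s_0$, with leaves labelled by terminals and internal nodes labelled by function symbols. Concrete semantics: $[\![x]\!]c=c$; $[\![t]\!]$ is the fixed value of a constant $t$; $[\![f(\Pi_1,\dots,\Pi_n)]\!]c=[\![f]\!]([\![\Pi_1]\!]c,\dots,[\![\Pi_n]\!]c)$. An example is $e=(e_{in},e_{out})$, and $\Pi$ satisfies $e$ iff $[\![\Pi]\!]e_{in}=e_{out}$. A predicate over a grammar symbol $s$ is a formula with sole free variable $s$. An abstract value is a conjunction of predicates ($\mathit{true}$ is the empty conjunction). $\gamma(\varphi)$ is the set of values satisfying $\varphi$, and $\varphi\sqsubseteq\varphi'$ iff $\varphi\Rightarrow\varphi'$. For a set $\mathcal{P}$ of predicates, $\alpha^{\mathcal{P}}(\varphi)$ is the conjunction of all $p\in\mathcal{P}$ (over the relevant symbol) with $\varphi\Rightarrow p$. $\mathcal{U}$ is a fixed universe of predicates, and an abstract value over $\mathcal{U}$ is a conjunction of predicates from $\mathcal{U}$. For each production $s\to f(s_1,\dots,s_n)$, an abstract transformer gives an abstract value $[\![f(\varphi_1,\dots,\varphi_n)]\!]^\#$ over $s$. It is sound: $c_i\in\gamma(\varphi_i)$ implies $[\![f]\!](c_1,\dots,c_n)\in\gamma([\![f(\varphi_1,\dots,\varphi_n)]\!]^\#)$. It is monotone: $\varphi_i\sqsubseteq\varphi_i'$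 for all $i$ implies $[\![f(\vec\varphi)]\!]^\#\sqsubseteq[\![f(\vec\varphi')]\!]^\#$. Abstract evaluation $\mathrm{EvalAbstract}(\Pi,c,\mathcal{P})$ is defined recursively: for a leaf $x$ it is $\alpha^{\mathcal{P}}(x=c)$; for a leaf constant $t$ it is $\alpha^{\mathcal{P}}(t=[\![t]\!])$; for a node $f$ with subtrees $\Pi_1,\dots,\Pi_n$ it is $\alpha^{\mathcal{P}}([\![f(\mathrm{EvalAbstract}(\Pi_1,c,\mathcal{P}),\dots,\mathrm{EvalAbstract}(\Pi_n,c,\mathcal{P}))]\!]^\#)$. The abstract finite tree automaton (AFTA) $\mathcal{A}_{\mathcal{P}}$ built from $G$, $\vec e$ and $\mathcal{P}$ has states $q_s^{\vec\varphi}$, where $\vec\varphi$ holds one abstract value per example. Each program $\Pi$ reaches the state whose $j$-th component is $\mathrm{EvalAbstract}(\Pi,e_{j,in},\mathcal{P})$. A state $q_{s_0}^{\vec\varphi}$ is final iff $e_{j,out}\in\gamma(\varphi_j)$ for every example $e_j\in\vec e$. Hence its language is $\mathcal{L}(\mathcal{A}_{\mathcal{P}})=\{\Pi : e_{j,out}\in\gamma(\mathrm{EvalAbstract}(\Pi,e_{j,in},\mathcal{P}))\text{ for all } e_j\in\vec e\}$. A proof of incorrectness of $\Pi$ with respect to $e$ is a map $\mathcal{I}$ from nodes of $\Pi$ to abstract values over $\mathcal{U}$ satisfying three conditions: (1) for every leaf $v$ with terminal $t$, $(t=[\![t]\!]e_{in})\sqsubseteq\mathcal{I}(v)$, where $[\![x]\!]e_{in}=e_{in}$;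 (2) for every internal node $v$ labelled $f$ with children $v_1,\dots,v_n$, $[\![f(\mathcal{I}(v_1),\dots,\mathcal{I}(v_n))]\!]^\#\sqsubseteq\mathcal{I}(v)$; (3) $e_{out}\notin\gamma(\mathcal{I}(\mathrm{root}(\Pi)))$. *)

theory Defs
  imports Main
begin

datatype 'c terminal = InVar | Cnst 'c

text \<open>Program ASTs. Each node additionally records the grammar symbol it was derived
  from (the AST together with its parse); the concrete semantics ignores this annotation.\<close>
datatype ('s, 'f, 'c) ast =
    Leaf 's "'c terminal"
  | Node 's 'f "('s, 'f, 'c) ast list"

fun root_sym :: "('s, 'f, 'c) ast \<Rightarrow> 's" where
  "root_sym (Leaf s t) = s"
| "root_sym (Node s f ts) = s"

record ('s, 'f, 'c, 'v, 'p) dsl =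
  leafP :: "('s \<times> 'c terminal) set"
  funP  :: "('s \<times> 'f \<times> 's list) set"
  start :: 's
  csem  :: "'c \<Rightarrow> 'v"
  fsem  :: "'f \<Rightarrow> 'v list \<Rightarrow> 'v"
  psym  :: "'p \<Rightarrow> 's"                      \<comment> \<open>grammar symbol a predicate is over\<close>
  psem  :: "'p \<Rightarrow> 'v \<Rightarrow> bool"
  univ  :: "'p set"
  absT  :: "'s \<Rightarrow> 'f \<Rightarrow> 's list \<Rightarrow> 'p set list \<Rightarrow> 'p set"

text \<open>Abstract values are conjunctions of predicates, represented as sets of predicates.\<close>
definition gamma :: "('s, 'f, 'c, 'v, 'p) dsl \<Rightarrow> 'p set \<Rightarrow> 'v set" where
  "gamma D \<phi> = {v. \<forall>p\<in>\<phi>. psem D p v}"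

definition sqle :: "('s, 'f, 'c, 'v, 'p) dsl \<Rightarrow> 'p set \<Rightarrow> 'p set \<Rightarrow> bool" where
  "sqle D \<phi> \<psi> \<longleftrightarrow> gamma D \<phi> \<subseteq> gamma D \<psi>"

definition absval :: "('s, 'f, 'c, 'v, 'p) dsl \<Rightarrow> 's \<Rightarrow> 'p set \<Rightarrow> bool" where
  "absval D s \<phi> \<longleftrightarrow> \<phi> \<subseteq> univ D \<and> (\<forall>p\<in>\<phi>. psym D p = s)"

text \<open>alpha^P of a formula (given by the set V of values satisfying it) over symbol s:
  the conjunction of all predicates p in P over s implied by the formula.\<close>
definition alpha :: "('s, 'f, 'c, 'v, 'p) dsl \<Rightarrow> 'p set \<Rightarrow> 's \<Rightarrow> 'v set \<Rightarrow> 'p set" where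
  "alpha D P s V = {p \<in> P. psym D p = s \<and> (\<forall>v\<in>V. psem D p v)}"

definition wf_dsl :: "('s, 'f, 'c, 'v, 'p) dsl \<Rightarrow> bool" where
  "wf_dsl D \<longleftrightarrow>
     finite (leafP D) \<and> finite (funP D) \<and>
     (\<forall>(s, f, ss) \<in> funP D.
        (\<forall>\<phi>s. length \<phi>s = length ss \<longrightarrow> (\<forall>i<length ss. absval D (ss ! i) (\<phi>s ! i)) \<longrightarrow>
             absval D s (absT D s f ss \<phi>s)) \<and>
        (\<forall>\<phi>s cs. length \<phi>s = length ss \<longrightarrow> length cs = length ss \<longrightarrow>
             (\<forall>i<length ss. absval D (ss ! i) (\<phi>s ! i)) \<longrightarrow>
             (\<forall>i<length ss. cs ! i \<in> gamma D (\<phi>s ! i)) \<longrightarrow>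
             fsem D f cs \<in> gamma D (absT D s f ss \<phi>s)) \<and>
        (\<forall>\<phi>s \<psi>s. length \<phi>s = length ss \<longrightarrow> length \<psi>s = length ss \<longrightarrow>
             (\<forall>i<length ss. absval D (ss ! i) (\<phi>s ! i)) \<longrightarrow>
             (\<forall>i<length ss. absval D (ss ! i) (\<psi>s ! i)) \<longrightarrow>
             (\<forall>i<length ss. sqle D (\<phi>s ! i) (\<psi>s ! i)) \<longrightarrow>
             sqle D (absT D s f ss \<phi>s) (absT D s f ss \<psi>s)))"

inductive derives :: "('s, 'f, 'c, 'v, 'p) dsl \<Rightarrow> 's \<Rightarrow> ('s, 'f, 'c) ast \<Rightarrow> bool"
  for D where
  leaf: "(s, t) \<in> leafP D \<Longrightarrow> derives D s (Leaf s t)"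
| node: "(s, f, map root_sym ts) \<in> funP D \<Longrightarrow> (\<forall>t\<in>set ts. derives D (root_sym t) t)
         \<Longrightarrow> derives D s (Node s f ts)"

fun term_val :: "('s, 'f, 'c, 'v, 'p) dsl \<Rightarrow> 'v \<Rightarrow> 'c terminal \<Rightarrow> 'v" where
  "term_val D c InVar = c"
| "term_val D c (Cnst k) = csem D k"

fun eval :: "('s, 'f, 'c, 'v, 'p) dsl \<Rightarrow> ('s, 'f, 'c) ast \<Rightarrow> 'v \<Rightarrow> 'v" where
  "eval D (Leaf s t) c = term_val D c t"
| "eval D (Node s f ts) c = fsem D f (map (\<lambda>t. eval D t c) ts)"

definition satisfies :: "('s, 'f, 'c, 'v, 'p) dsl \<Rightarrow> ('s, 'f, 'c) ast \<Rightarrow> 'v \<times> 'v \<Rightarrow> bool" where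
  "satisfies D \<Pi> e \<longleftrightarrow> eval D \<Pi> (fst e) = snd e"

fun eval_abs :: "('s, 'f, 'c, 'v, 'p) dsl \<Rightarrow> ('s, 'f, 'c) ast \<Rightarrow> 'v \<Rightarrow> 'p set \<Rightarrow> 'p set" where
  "eval_abs D (Leaf s t) c P = alpha D P s {term_val D c t}"
| "eval_abs D (Node s f ts) c P =
     alpha D P s (gamma D (absT D s f (map root_sym ts) (map (\<lambda>t. eval_abs D t c P) ts)))"

definition afta_lang :: "('s, 'f, 'c, 'v, 'p) dsl \<Rightarrow> ('v \<times> 'v) set \<Rightarrow> 'p set \<Rightarrow> ('s, 'f, 'c) ast set" where
  "afta_lang D E P = {\<Pi>. derives D (start D) \<Pi> \<and>
      (\<forall>(ein, eout) \<in> E. eout \<in> gamma D (eval_abs D \<Pi> ein P))}"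

text \<open>Nodes of a program, addressed by paths from the root.\<close>
function positions :: "('s, 'f, 'c) ast \<Rightarrow> nat list set" where
  "positions (Leaf s t) = {[]}"
| "positions (Node s f ts) = insert [] (\<Union>i\<in>{..<length ts}. (\<lambda>q. i # q) ` positions (ts ! i))"
  by pat_completeness auto
termination
  by (relation "measure size") (auto intro: size_list_estimation' nth_mem less_Suc_eq_le[THEN iffD2])

fun subtree :: "('s, 'f, 'c) ast \<Rightarrow> nat list \<Rightarrow> ('s, 'f, 'c) ast" where
  "subtree t [] = t"
| "subtree (Leaf s t) (i # q) = Leaf s t"
| "subtree (Node s f ts) (i # q) = subtree (ts ! i) q"

definition proof_of_incorrectness ::
  "('s, 'f, 'c, 'v, 'p) dsl \<Rightarrow> ('s, 'f, 'c) ast \<Rightarrow> 'v \<times> 'v \<Rightarrow> (nat list \<Rightarrow> 'p set) \<Rightarrow> bool" where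
  "proof_of_incorrectness D \<Pi> e I \<longleftrightarrow>
     (\<forall>q\<in>positions \<Pi>. absval D (root_sym (subtree \<Pi> q)) (I q)) \<and>
     (\<forall>q\<in>positions \<Pi>. \<forall>s t. subtree \<Pi> q = Leaf s t \<longrightarrow>
         {term_val D (fst e) t} \<subseteq> gamma D (I q)) \<and>
     (\<forall>q\<in>positions \<Pi>. \<forall>s f ts. subtree \<Pi> q = Node s f ts \<longrightarrow>
         sqle D (absT D s f (map root_sym ts) (map (\<lambda>i. I (q @ [i])) [0..<length ts])) (I q)) \<and>
     snd e \<notin> gamma D (I [])"

definition preds_of :: "('s, 'f, 'c) ast \<Rightarrow> (nat list \<Rightarrow> 'p set) \<Rightarrow> 'p set" where
  "preds_of \<Pi> I = (\<Union>q\<in>positions \<Pi>. I q)"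

end

theory Submission
  imports Defs
begin

text \<open>Abstract evaluation over a predicate set P is the most precise annotation of a program
  by abstract values drawn from P: any annotation satisfying the leaf and node conditions of a
  proof of incorrectness with values in P is implied, node by node, by EvalAbstract over P, since
  alpha over P keeps every predicate of P that the transformer output implies. Over
  Pi \<union> preds(I) the root value of I, which excludes the expected output, is therefore implied,
  so the program is rejected. Enlarging P only strengthens abstract values, so the language can
  only shrink.\<close>

lemma positions_Nil [simp]: "[] \<in> positions t"
  by (cases t) auto

lemma sqle_superset: "\<psi> \<subseteq> \<phi> \<Longrightarrow> sqle D \<phi> \<psi>"
  by (auto simp: sqle_def gamma_def)

lemma alpha_sqle_mono:
  "P \<subseteq> P' \<Longrightarrow> V' \<subseteq> V \<Longrightarrow> sqle D (alpha D P' s V') (alpha D P s V)"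
  unfolding sqle_def gamma_def alpha_def by blast

lemma alpha_greatest:
  assumes "absval D s \<phi>" "\<phi> \<subseteq> P" "V \<subseteq> gamma D \<phi>"
  shows "\<phi> \<subseteq> alpha D P s V"
  using assms by (auto simp: absval_def alpha_def gamma_def)

lemma absval_eval_abs: "P \<subseteq> univ D \<Longrightarrow> absval D (root_sym t) (eval_abs D t c P)"
  by (cases t) (auto simp: absval_def alpha_def)

lemma wf_dsl_absT_mono:
  assumes "wf_dsl D" "(s, f, ss) \<in> funP D"
    and "length \<phi>s = length ss" "length \<psi>s = length ss"
    and "\<forall>i<length ss. absval D (ss ! i) (\<phi>s ! i)" "\<forall>i<length ss. absval D (ss ! i) (\<psi>s ! i)"
    and "\<forall>i<length ss. sqle D (\<phi>s ! i) (\<psi>s ! i)"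
  shows "sqle D (absT D s f ss \<phi>s) (absT D s f ss \<psi>s)"
  using bspec[OF assms(1)[unfolded wf_dsl_def, THEN conjunct2, THEN conjunct2] assms(2)] assms(3-)
  by simp

lemma eval_abs_sqle_mono:
  assumes "derives D s t" "wf_dsl D" "P \<subseteq> P'" "P' \<subseteq> univ D"
  shows "sqle D (eval_abs D t c P') (eval_abs D t c P)"
  using assms
proof (induction rule: derives.induct)
  case (leaf s t)
  then show ?case by (simp add: alpha_sqle_mono)
next
  case (node s f ts)
  let ?ss = "map root_sym ts"
  have "sqle D (absT D s f ?ss (map (\<lambda>t. eval_abs D t c P') ts))
               (absT D s f ?ss (map (\<lambda>t. eval_abs D t c P) ts))"
    using node absval_eval_abs[of P' D] absval_eval_abs[of P D]
    by (intro wf_dsl_absT_mono) auto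
  then show ?case
    using alpha_sqle_mono[OF node.prems(2)] by (simp add: sqle_def)
qed

lemma afta_lang_antimono:
  assumes "wf_dsl D" "P \<subseteq> P'" "P' \<subseteq> univ D"
  shows "afta_lang D E P' \<subseteq> afta_lang D E P"
proof
  fix t assume t: "t \<in> afta_lang D E P'"
  then have "derives D (start D) t" by (simp add: afta_lang_def)
  then have "gamma D (eval_abs D t c P') \<subseteq> gamma D (eval_abs D t c P)" for c
    using eval_abs_sqle_mono[OF _ assms] by (simp add: sqle_def)
  with t show "t \<in> afta_lang D E P" by (fastforce simp: afta_lang_def)
qed

text \<open>Conditions (1) and (2) of a proof of incorrectness at node q, with values from P.\<close>
definition annotation_at ::
  "('s, 'f, 'c, 'v, 'p) dsl \<Rightarrow> ('s, 'f, 'c) ast \<Rightarrow> 'v \<Rightarrow> (nat list \<Rightarrow> 'p set) \<Rightarrow> 'p set \<Rightarrow>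
   nat list \<Rightarrow> bool"
where
  "annotation_at D t c J P q \<longleftrightarrow>
     absval D (root_sym (subtree t q)) (J q) \<and> J q \<subseteq> P \<and>
     (\<forall>s u. subtree t q = Leaf s u \<longrightarrow> term_val D c u \<in> gamma D (J q)) \<and>
     (\<forall>s f ts. subtree t q = Node s f ts \<longrightarrow>
        sqle D (absT D s f (map root_sym ts) (map (\<lambda>i. J (q @ [i])) [0..<length ts])) (J q))"

definition annotation_within ::
  "('s, 'f, 'c, 'v, 'p) dsl \<Rightarrow> ('s, 'f, 'c) ast \<Rightarrow> 'v \<Rightarrow> (nat list \<Rightarrow> 'p set) \<Rightarrow> 'p set \<Rightarrow> bool"
where
  "annotation_within D t c J P \<longleftrightarrow> (\<forall>q\<in>positions t. annotation_at D t c J P q)"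

lemma annotation_at_Cons:
  "annotation_at D (Node s f ts) c J P (i # q) \<longleftrightarrow> annotation_at D (ts ! i) c (\<lambda>q. J (i # q)) P q"
  by (simp add: annotation_at_def)

lemma annotation_within_child:
  assumes "annotation_within D (Node s f ts) c J P" "i < length ts"
  shows "annotation_within D (ts ! i) c (\<lambda>q. J (i # q)) P"
  unfolding annotation_within_def
proof
  fix q assume "q \<in> positions (ts ! i)"
  with assms(2) have "i # q \<in> positions (Node s f ts)" by auto
  with assms(1) show "annotation_at D (ts ! i) c (\<lambda>q. J (i # q)) P q"
    using annotation_at_Cons[of D s f ts c J P i q] unfolding annotation_within_def by blast
qed

lemma annotation_within_eval_abs:
  assumes "derives D s t" "wf_dsl D" "P \<subseteq> univ D" "annotation_within D t c J P"
  shows "J [] \<subseteq> eval_abs D t c P"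
  using assms
proof (induction arbitrary: J rule: derives.induct)
  case (leaf s u)
  then have "annotation_at D (Leaf s u) c J P []"
    by (simp add: annotation_within_def)
  then show ?case
    by (simp add: annotation_at_def alpha_greatest)
next
  case (node s f ts)
  let ?ss = "map root_sym ts"
  let ?A = "map (\<lambda>t. eval_abs D t c P) ts"
  let ?B = "map (\<lambda>i. J [i]) [0..<length ts]"
  have children: "J [i] \<subseteq> eval_abs D (ts ! i) c P" if "i < length ts" for i
  proof -
    have "ts ! i \<in> set ts" using that by simp
    then show ?thesis
      using node.IH node.prems(1,2) annotation_within_child[OF node.prems(3) that] by blast
  qed
  have child_absval: "absval D (root_sym (ts ! i)) (J [i])" if "i < length ts" for i
  proof -
    have "[i] \<in> positions (Node s f ts)"
      using that positions_Nil[of "ts ! i"] by force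
    with node.prems(3) have "annotation_at D (Node s f ts) c J P [i]"
      unfolding annotation_within_def by blast
    then show ?thesis by (simp add: annotation_at_def)
  qed
  have "sqle D (absT D s f ?ss ?A) (absT D s f ?ss ?B)"
    using node.prems(1,2) node.hyps(1) absval_eval_abs[of P D] child_absval
    by (intro wf_dsl_absT_mono) (simp_all add: sqle_superset children)
  moreover have "annotation_at D (Node s f ts) c J P []"
    using node.prems(3) by (simp add: annotation_within_def)
  ultimately have "absval D s (J [])" "J [] \<subseteq> P"
    and "gamma D (absT D s f ?ss ?A) \<subseteq> gamma D (J [])"
    by (auto simp: annotation_at_def sqle_def)
  then show ?case
    by (simp add: alpha_greatest)
qed

lemma proof_of_incorrectness_annotation_within:
  assumes "proof_of_incorrectness D \<Pi> e I"
  shows "annotation_within D \<Pi> (fst e) I (P \<union> preds_of \<Pi> I)"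
  using assms
  unfolding proof_of_incorrectness_def annotation_within_def annotation_at_def preds_of_def
  by blast

lemma preds_of_subset_univ:
  "proof_of_incorrectness D \<Pi> e I \<Longrightarrow> preds_of \<Pi> I \<subseteq> univ D"
  unfolding proof_of_incorrectness_def preds_of_def absval_def by blast

lemma proof_of_incorrectness_refutes:
  assumes "wf_dsl D" "P \<subseteq> univ D" "derives D s \<Pi>" "proof_of_incorrectness D \<Pi> e I"
  shows "snd e \<notin> gamma D (eval_abs D \<Pi> (fst e) (P \<union> preds_of \<Pi> I))"
proof -
  have "P \<union> preds_of \<Pi> I \<subseteq> univ D"
    using assms(2) preds_of_subset_univ[OF assms(4)] by blast
  with assms have "I [] \<subseteq> eval_abs D \<Pi> (fst e) (P \<union> preds_of \<Pi> I)"
    by (intro annotation_within_eval_abs proof_of_incorrectness_annotation_within)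
  with assms(4) show ?thesis
    unfolding proof_of_incorrectness_def gamma_def by blast
qed

theorem mainTheorem2:
  fixes D :: "('s, 'f, 'c, 'v, 'p) dsl"
    and E :: "('v \<times> 'v) set"
    and Pi :: "'p set" and Pnext :: "'p set"
    and \<Pi> :: "('s, 'f, 'c) ast"
    and e :: "'v \<times> 'v"
    and I :: "nat list \<Rightarrow> 'p set"
  assumes "wf_dsl D"
    and "finite E"
    and "Pi \<subseteq> univ D"
    and "\<Pi> \<in> afta_lang D E Pi"
    and "e \<in> E"
    and "\<not> satisfies D \<Pi> e"
    and "proof_of_incorrectness D \<Pi> e I"
    and "Pnext = Pi \<union> preds_of \<Pi> I"
  shows "\<Pi> \<notin> afta_lang D E Pnext \<and> afta_lang D E Pnext \<subset> afta_lang D E Pi"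
proof -
  have "derives D (start D) \<Pi>"
    using assms(4) by (simp add: afta_lang_def)
  then have "snd e \<notin> gamma D (eval_abs D \<Pi> (fst e) Pnext)"
    using proof_of_incorrectness_refutes[OF assms(1,3) _ assms(7)] assms(8) by simp
  with assms(5) have rejected: "\<Pi> \<notin> afta_lang D E Pnext"
    unfolding afta_lang_def by (cases e) auto
  have "Pnext \<subseteq> univ D"
    using assms(3,8) preds_of_subset_univ[OF assms(7)] by blast
  then have "afta_lang D E Pnext \<subseteq> afta_lang D E Pi"
    using afta_lang_antimono[OF assms(1)] assms(8) by blast
  with rejected assms(4) show ?thesis by blast
qed

end
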